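(* Let $(X,<)$ be a linearly ordered set. For all ultrafilters $u,v\in\beta X$: $$u\,\tilde<\,v \iff \mathrm{supp}(u)<\mathrm{supp}(v)\ \vee\ \mathrm{supp}(u)=\mathrm{supp}(v)=I_u=I_v,$$ $$u\,\tilde\le\,v \iff \mathrm{supp}(u)<\mathrm{supp}(v)\ \vee\ \mathrm{supp}(u)=\mathrm{supp}(v)=I_u=I_v\ \vee\ \exists x\in X\,(u=v=\tilde x),$$ $$u\,\tilde>\,v \iff \mathrm{supp}(u)>\mathrm{supp}(v)\ \vee\ \mathrm{supp}(u)=\mathrm{supp}(v)=J_u=J_v,$$ $$u\,\tilde\ge\,v \iff \mathrm{supp}(u)>\mathrm{supp}(v)\ \vee\ \mathrm{supp}(u)=\mathrm{supp}(v)=J_u=J_v\ \vee\ \exists x\in X\,(u=v=\tilde x).$$ Consequently, on non-principal ultrafilters, $\tilde<$ coincides with $\tilde\le$ and $\tilde>$ coincides with $\tilde\ge$.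
   Context: $(X,<)$ is a linear order, $\le$ its reflexive version, $>$ and $\ge$ the converse relations. $\beta X$ is the set of all ultrafilters over $X$; $\tilde x=\{S\subseteq X:x\in S\}$ for $x\in X$. For a binary relation $R$ on $X$, its ultrafilter extension $\tilde R$ on $\beta X$ is defined by $u\,\tilde R\,v\iff\{x\in X:\{y\in X:x\,R\,y\}\in v\}\in u$. Initial segments are downward closed subsets, final segments upward closed subsets. $I_u=\bigcap\{I\in u: I\text{ initial segment}\}$, $J_u=\bigcap\{J\in u: J\text{ final segment}\}$. For non-principal $u$ exactly one of $I_u\in u$, $J_u\in u$ holds. Supports: if $u=\tilde x$ then $\mathrm{supp}(u)=\{x\}$ (a "point"); if $u$ is non-principal and $I_u\in u$ then $\mathrm{supp}(u)$ is $I_u$ regarded as a left half-cut (a nonempty initial segment with no greatest element); if $u$ is non-principal and $J_u\in u$ then $\mathrm{supp}(u)$ is $J_u$ regarded as a right half-cut (a nonempty final segment with no least element). Two supports are equal iff they are of the same kind (point/left/right) and equal as sets. The notation "$\mathrm{supp}(u)=I_u$" means "$u$ is non-principal and $I_u\in u$", and "$\mathrm{supp}(u)=J_u$" means "$u$ is non-principal and $J_u\in u$"; thus $\mathrm{supp}(u)=\mathrm{supp}(v)=I_u=I_v$ means both are non-principal, $I_u\in u$, $I_v\in v$ and $I_u=I_v$ (similarly for $J$). The natural linear order on supports (points $\{x\}$, left half-cuts $I$, right half-cuts $J$): $\{x\}<\{y\}$ iff $x<y$; $\{x\}<I$ iff $x\in I$, and $I<\{x\}$ iff $x\notin I$; $\{x\}<J$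 iff $x\notin J$, and $J<\{x\}$ iff $x\in J$; $I<I'$ iff $I\subsetneq I'$; $J<J'$ iff $J\supsetneq J'$; $I<J$ iff $I\cap J=\emptyset$, and $J<I$ iff $I\cap J\neq\emptyset$. Write $\le$ for its reflexive version. *)

theory Defs
  imports Main
begin

text \<open>The linear order X is the universe of a type 'a of class linorder.
  Ultrafilters over X are represented as sets of subsets of UNIV.\<close>

definition is_ultrafilter :: "'a set set \<Rightarrow> bool" where
  "is_ultrafilter U \<longleftrightarrow>
     UNIV \<in> U \<and> {} \<notin> U \<and>
     (\<forall>S T. S \<in> U \<and> S \<subseteq> T \<longrightarrow> T \<in> U) \<and>
     (\<forall>S T. S \<in> U \<and> T \<in> U \<longrightarrow> S \<inter> T \<in> U) \<and>
     (\<forall>S. S \<in> U \<or> - S \<in> U)"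

definition principal_uf :: "'a \<Rightarrow> 'a set set" where
  "principal_uf x = {S. x \<in> S}"

definition is_principal :: "'a set set \<Rightarrow> bool" where
  "is_principal u \<longleftrightarrow> (\<exists>x. u = principal_uf x)"

definition uf_ext :: "('a \<Rightarrow> 'a \<Rightarrow> bool) \<Rightarrow> 'a set set \<Rightarrow> 'a set set \<Rightarrow> bool" where
  "uf_ext R u v \<longleftrightarrow> {x. {y. R x y} \<in> v} \<in> u"

definition initial_seg :: "'a::linorder set \<Rightarrow> bool" where
  "initial_seg I \<longleftrightarrow> (\<forall>x y. y \<in> I \<and> x \<le> y \<longrightarrow> x \<in> I)"

definition final_seg :: "'a::linorder set \<Rightarrow> bool" where
  "final_seg J \<longleftrightarrow> (\<forall>x y. y \<in> J \<and> y \<le> x \<longrightarrow> x \<in> J)"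

definition I_of :: "'a::linorder set set \<Rightarrow> 'a set" where
  "I_of u = \<Inter>{I \<in> u. initial_seg I}"

definition J_of :: "'a::linorder set set \<Rightarrow> 'a set" where
  "J_of u = \<Inter>{J \<in> u. final_seg J}"

datatype 'a support = Point 'a | LeftCut "'a set" | RightCut "'a set"

definition supp :: "'a::linorder set set \<Rightarrow> 'a support" where
  "supp u = (if is_principal u then Point (THE x. u = principal_uf x)
             else if I_of u \<in> u then LeftCut (I_of u) else RightCut (J_of u))"

fun supp_less :: "'a::linorder support \<Rightarrow> 'a support \<Rightarrow> bool" where
  "supp_less (Point x) (Point y) \<longleftrightarrow> x < y"
| "supp_less (Point x) (LeftCut I) \<longleftrightarrow> x \<in> I"
| "supp_less (LeftCut I) (Point x) \<longleftrightarrow> x \<notin> I"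
| "supp_less (Point x) (RightCut J) \<longleftrightarrow> x \<notin> J"
| "supp_less (RightCut J) (Point x) \<longleftrightarrow> x \<in> J"
| "supp_less (LeftCut I) (LeftCut I') \<longleftrightarrow> I \<subset> I'"
| "supp_less (RightCut J) (RightCut J') \<longleftrightarrow> J \<supset> J'"
| "supp_less (LeftCut I) (RightCut J) \<longleftrightarrow> I \<inter> J = {}"
| "supp_less (RightCut J) (LeftCut I) \<longleftrightarrow> I \<inter> J \<noteq> {}"

end

theory Submission
  imports Defs
begin

text \<open>
  By definition \<open>u <~ v\<close> holds iff \<open>{x. {y. x < y} \<in> v} \<in> u\<close>. For an ultrafilter \<open>v\<close> the
  inner condition reads \<open>Point x < supp v\<close>, so the outer set is an initial segment \<open>S\<close>; and an
  ultrafilter \<open>u\<close> contains an initial segment \<open>S\<close> exactly when \<open>supp u \<le> LeftCut S\<close> in the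
  order of supports. Hence \<open>u <~ v\<close> is a statement about \<open>supp u\<close> and \<open>supp v\<close> alone, decided
  by a case distinction on their kinds; \<open>\<le>\<close> is handled in the same way. Since ultrafilters
  decide complements, \<open>u >~ v\<close> is the negation of \<open>u \<le>~ v\<close> and \<open>u \<ge>~ v\<close> that of \<open>u <~ v\<close>,
  and linearity of the order on supports turns these negations into the stated form.
\<close>

lemma ultrafilter_mono: "is_ultrafilter u \<Longrightarrow> S \<in> u \<Longrightarrow> S \<subseteq> T \<Longrightarrow> T \<in> u"
  unfolding is_ultrafilter_def by blast

lemma ultrafilter_Int: "is_ultrafilter u \<Longrightarrow> S \<in> u \<Longrightarrow> T \<in> u \<Longrightarrow> S \<inter> T \<in> u"
  unfolding is_ultrafilter_def by blast

lemma ultrafilter_nonempty: "is_ultrafilter u \<Longrightarrow> S \<in> u \<Longrightarrow> S \<noteq> {}"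
  unfolding is_ultrafilter_def by blast

lemma ultrafilter_Compl_iff: "is_ultrafilter u \<Longrightarrow> - S \<in> u \<longleftrightarrow> S \<notin> u"
  unfolding is_ultrafilter_def by (metis Compl_disjoint)

lemma ultrafilter_singleton:
  assumes "is_ultrafilter u" "{x} \<in> u"
  shows "u = principal_uf x"
proof -
  have "S \<in> u \<longleftrightarrow> x \<in> S" for S
    using ultrafilter_Int[OF assms, of S] ultrafilter_nonempty[OF assms(1), of "{x} \<inter> S"]
      ultrafilter_mono[OF assms, of S] by blast
  then show ?thesis
    unfolding principal_uf_def by auto
qed

lemma principal_uf_inject: "principal_uf x = principal_uf y \<longleftrightarrow> x = y"
  unfolding principal_uf_def by (metis insertI1 mem_Collect_eq singletonD)

lemma ultrafilter_ext_not:
  assumes "is_ultrafilter u" "is_ultrafilter v"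
  shows "uf_ext (\<lambda>x y. \<not> R x y) u v \<longleftrightarrow> \<not> uf_ext R u v"
proof -
  have "{y. \<not> R x y} \<in> v \<longleftrightarrow> {y. R x y} \<notin> v" for x
    using ultrafilter_Compl_iff[OF assms(2), of "{y. R x y}"] by (simp add: Collect_neg_eq)
  then have "{x. {y. \<not> R x y} \<in> v} = - {x. {y. R x y} \<in> v}"
    by blast
  then show ?thesis
    unfolding uf_ext_def using ultrafilter_Compl_iff[OF assms(1)] by simp
qed

lemma initial_seg_trichotomy:
  fixes I :: "'a::linorder set"
  assumes "initial_seg I" "initial_seg I'"
  shows "I = I' \<or> I \<subset> I' \<or> I' \<subset> I"
proof -
  have "I \<subseteq> I' \<or> I' \<subseteq> I"
    using assms unfolding initial_seg_def by (meson linear subsetI)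
  then show ?thesis
    by blast
qed

lemma final_seg_trichotomy:
  fixes J :: "'a::linorder set"
  assumes "final_seg J" "final_seg J'"
  shows "J = J' \<or> J \<subset> J' \<or> J' \<subset> J"
proof -
  have "J \<subseteq> J' \<or> J' \<subseteq> J"
    using assms unfolding final_seg_def by (meson linear subsetI)
  then show ?thesis
    by blast
qed

lemma initial_seg_subset_less_iff:
  "initial_seg I \<Longrightarrow> I \<subseteq> {x. x < y} \<longleftrightarrow> (y::'a::linorder) \<notin> I"
  unfolding initial_seg_def by (auto simp: not_less) (meson not_le)

lemma initial_seg_subset_le_iff:
  "initial_seg I \<Longrightarrow> \<forall>x\<in>I. \<exists>z\<in>I. x < z \<Longrightarrow> I \<subseteq> {x. x \<le> y} \<longleftrightarrow> (y::'a::linorder) \<notin> I"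
  unfolding initial_seg_def by (fastforce simp: not_le dest: less_imp_le)

lemma final_seg_meets_less_iff:
  "final_seg J \<Longrightarrow> \<forall>x\<in>J. \<exists>z\<in>J. z < x \<Longrightarrow> {x. x < y} \<inter> J \<noteq> {} \<longleftrightarrow> (y::'a::linorder) \<in> J"
  unfolding final_seg_def by (auto dest: less_imp_le)

lemma final_seg_meets_le_iff:
  "final_seg J \<Longrightarrow> {x. x \<le> y} \<inter> J \<noteq> {} \<longleftrightarrow> (y::'a::linorder) \<in> J"
  unfolding final_seg_def by auto

lemma final_seg_Compl_meets_iff:
  fixes J :: "'a::linorder set"
  assumes J: "final_seg J" and J': "final_seg J'"
  shows "- J' \<inter> J \<noteq> {} \<longleftrightarrow> J' \<subset> J"
proof
  assume "- J' \<inter> J \<noteq> {}"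
  then obtain y where y: "y \<in> J" "y \<notin> J'"
    by blast
  have "J' \<subseteq> J"
  proof
    fix x assume "x \<in> J'"
    then have "y < x"
      using y J' unfolding final_seg_def by (meson not_le)
    then show "x \<in> J"
      using y J unfolding final_seg_def by (meson less_imp_le)
  qed
  with y show "J' \<subset> J"
    by blast
qed blast

lemma initial_seg_I_of: "initial_seg (I_of u)"
  unfolding initial_seg_def I_of_def by auto

lemma final_seg_J_of: "final_seg (J_of u)"
  unfolding final_seg_def J_of_def by auto

lemma I_of_subset: "S \<in> u \<Longrightarrow> initial_seg S \<Longrightarrow> I_of u \<subseteq> S"
  unfolding I_of_def by auto

lemma J_of_subset: "S \<in> u \<Longrightarrow> final_seg S \<Longrightarrow> J_of u \<subseteq> S"
  unfolding J_of_def by auto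

lemma mem_I_of_iff:
  fixes u :: "'a::linorder set set"
  assumes u: "is_ultrafilter u"
  shows "x \<in> I_of u \<longleftrightarrow> {y. x \<le> y} \<in> u"
proof
  assume "x \<in> I_of u"
  moreover have "initial_seg {y. y < x}"
    unfolding initial_seg_def by auto
  ultimately have "{y. y < x} \<notin> u"
    using I_of_subset by blast
  moreover have "- {y. y < x} = {y. x \<le> y}"
    by auto
  ultimately show "{y. x \<le> y} \<in> u"
    using ultrafilter_Compl_iff[OF u] by metis
next
  assume x: "{y. x \<le> y} \<in> u"
  show "x \<in> I_of u"
    unfolding I_of_def
  proof
    fix S assume "S \<in> {I \<in> u. initial_seg I}"
    then have "S \<inter> {y. x \<le> y} \<noteq> {}"
      using ultrafilter_Int[OF u _ x] ultrafilter_nonempty[OF u] by blast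
    with \<open>S \<in> {I \<in> u. initial_seg I}\<close> show "x \<in> S"
      unfolding initial_seg_def by blast
  qed
qed

lemma mem_J_of_iff:
  fixes u :: "'a::linorder set set"
  assumes u: "is_ultrafilter u"
  shows "x \<in> J_of u \<longleftrightarrow> {y. y \<le> x} \<in> u"
proof
  assume "x \<in> J_of u"
  moreover have "final_seg {y. x < y}"
    unfolding final_seg_def by auto
  ultimately have "{y. x < y} \<notin> u"
    using J_of_subset by blast
  moreover have "- {y. x < y} = {y. y \<le> x}"
    by auto
  ultimately show "{y. y \<le> x} \<in> u"
    using ultrafilter_Compl_iff[OF u] by metis
next
  assume x: "{y. y \<le> x} \<in> u"
  show "x \<in> J_of u"
    unfolding J_of_def
  proof
    fix S assume "S \<in> {J \<in> u. final_seg J}"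
    then have "S \<inter> {y. y \<le> x} \<noteq> {}"
      using ultrafilter_Int[OF u _ x] ultrafilter_nonempty[OF u] by blast
    with \<open>S \<in> {J \<in> u. final_seg J}\<close> show "x \<in> S"
      unfolding final_seg_def by blast
  qed
qed

lemma singleton_mem_iff:
  fixes u :: "'a::linorder set set"
  assumes "is_ultrafilter u"
  shows "{x} \<in> u \<longleftrightarrow> x \<in> I_of u \<and> x \<in> J_of u"
proof -
  have "{y. x \<le> y} \<inter> {y. y \<le> x} = {x}"
    by auto
  then show ?thesis
    using mem_I_of_iff[OF assms] mem_J_of_iff[OF assms] ultrafilter_Int[OF assms]
      ultrafilter_mono[OF assms] by (metis Int_lower1 Int_lower2)
qed

lemma I_of_or_J_of_mem:
  fixes u :: "'a::linorder set set"
  assumes u: "is_ultrafilter u"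
  shows "I_of u \<in> u \<or> J_of u \<in> u"
proof -
  have "- I_of u \<subseteq> J_of u"
  proof
    fix x assume "x \<in> - I_of u"
    then have "- {y. x \<le> y} \<in> u"
      using mem_I_of_iff[OF u] ultrafilter_Compl_iff[OF u] by blast
    moreover have "- {y. x \<le> y} \<subseteq> {y. y \<le> x}"
      by auto
    ultimately show "x \<in> J_of u"
      using mem_J_of_iff[OF u] ultrafilter_mono[OF u] by blast
  qed
  then show ?thesis
    using ultrafilter_Compl_iff[OF u, of "I_of u"] ultrafilter_mono[OF u, of "- I_of u"] by blast
qed

lemma principal_if_I_of_J_of_mem:
  assumes u: "is_ultrafilter u" and "I_of u \<in> u" "J_of u \<in> u"
  shows "is_principal u"
proof -
  obtain x where "x \<in> I_of u" "x \<in> J_of u"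
    using ultrafilter_Int[OF assms] ultrafilter_nonempty[OF u] by blast
  then show ?thesis
    using singleton_mem_iff[OF u] ultrafilter_singleton[OF u] unfolding is_principal_def by blast
qed

lemma I_of_no_greatest:
  assumes u: "is_ultrafilter u" and np: "\<not> is_principal u" and I: "I_of u \<in> u"
    and x: "x \<in> I_of u"
  shows "\<exists>y\<in>I_of u. x < y"
proof (rule ccontr)
  assume "\<not> ?thesis"
  then have "I_of u \<subseteq> {y. y \<le> x}"
    by (auto simp: not_less)
  then have "x \<in> J_of u"
    using mem_J_of_iff[OF u] ultrafilter_mono[OF u I] by blast
  with x show False
    using singleton_mem_iff[OF u] ultrafilter_singleton[OF u] np unfolding is_principal_def by blast
qed

lemma J_of_no_least:
  assumes u: "is_ultrafilter u" and np: "\<not> is_principal u" and J: "J_of u \<in> u"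
    and x: "x \<in> J_of u"
  shows "\<exists>y\<in>J_of u. y < x"
proof (rule ccontr)
  assume "\<not> ?thesis"
  then have "J_of u \<subseteq> {y. x \<le> y}"
    by (auto simp: not_less)
  then have "x \<in> I_of u"
    using mem_I_of_iff[OF u] ultrafilter_mono[OF u J] by blast
  with x show False
    using singleton_mem_iff[OF u] ultrafilter_singleton[OF u] np unfolding is_principal_def by blast
qed

lemma supp_eq_Point_iff: "supp u = Point x \<longleftrightarrow> u = principal_uf x"
proof
  assume "supp u = Point x"
  then obtain y where "u = principal_uf y" "(THE z. u = principal_uf z) = x"
    unfolding supp_def is_principal_def by (auto split: if_splits)
  then show "u = principal_uf x"
    by (simp add: principal_uf_inject)
next
  assume "u = principal_uf x"
  moreover have "(THE z. principal_uf x = principal_uf z) = x"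
    by (simp add: principal_uf_inject)
  ultimately show "supp u = Point x"
    unfolding supp_def is_principal_def by auto
qed

lemma supp_eq_LeftCut_iff: "supp u = LeftCut I \<longleftrightarrow> \<not> is_principal u \<and> I_of u \<in> u \<and> I = I_of u"
  unfolding supp_def by auto

lemma supp_eq_RightCut_iff:
  assumes "is_ultrafilter u"
  shows "supp u = RightCut J \<longleftrightarrow> \<not> is_principal u \<and> J_of u \<in> u \<and> J = J_of u"
  using principal_if_I_of_J_of_mem[OF assms] I_of_or_J_of_mem[OF assms]
  unfolding supp_def by auto

lemma supp_cases:
  assumes "is_ultrafilter u"
  obtains x where "u = principal_uf x" "supp u = Point x"
  | "\<not> is_principal u" "I_of u \<in> u" "supp u = LeftCut (I_of u)"
  | "\<not> is_principal u" "J_of u \<in> u" "supp u = RightCut (J_of u)"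
  using I_of_or_J_of_mem[OF assms] supp_eq_Point_iff supp_eq_LeftCut_iff
    supp_eq_RightCut_iff[OF assms] unfolding is_principal_def by metis

text \<open>The supports that arise from ultrafilters; the paper's half-cuts are moreover nonempty,
  which the argument never uses.\<close>

fun valid_support :: "'a::linorder support \<Rightarrow> bool" where
  "valid_support (Point x) \<longleftrightarrow> True"
| "valid_support (LeftCut I) \<longleftrightarrow> initial_seg I \<and> (\<forall>x\<in>I. \<exists>y\<in>I. x < y)"
| "valid_support (RightCut J) \<longleftrightarrow> final_seg J \<and> (\<forall>x\<in>J. \<exists>y\<in>J. y < x)"

lemma valid_support_supp: "is_ultrafilter u \<Longrightarrow> valid_support (supp u)"
  by (cases rule: supp_cases)
    (auto simp: initial_seg_I_of final_seg_J_of I_of_no_greatest J_of_no_least)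

definition supp_le :: "'a::linorder support \<Rightarrow> 'a support \<Rightarrow> bool" where
  "supp_le a b \<longleftrightarrow> supp_less a b \<or> a = b"

lemma supp_le_simps [simp]:
  "supp_le (Point x) (Point y) \<longleftrightarrow> x \<le> y"
  "supp_le (Point x) (LeftCut S) \<longleftrightarrow> x \<in> S"
  "supp_le (Point x) (RightCut J) \<longleftrightarrow> x \<notin> J"
  "supp_le (LeftCut I) (LeftCut S) \<longleftrightarrow> I \<subseteq> S"
  "supp_le (RightCut J) (LeftCut S) \<longleftrightarrow> S \<inter> J \<noteq> {}"
  by (auto simp: supp_le_def)

lemma supp_less_irrefl: "\<not> supp_less a a"
  by (cases a) auto

lemma supp_less_asym: "supp_less a b \<Longrightarrow> \<not> supp_less b a"
  by (cases a; cases b) auto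

lemma supp_less_linear:
  assumes "valid_support a" "valid_support b"
  shows "a = b \<or> supp_less a b \<or> supp_less b a"
proof (cases a)
  case (Point x)
  then show ?thesis
    by (cases b) (auto simp: less_linear)
next
  case (LeftCut I)
  then show ?thesis
    using assms initial_seg_trichotomy by (cases b) auto
next
  case (RightCut J)
  then show ?thesis
    using assms final_seg_trichotomy by (cases b) auto
qed

lemma initial_seg_points_below:
  "valid_support t \<Longrightarrow> initial_seg {x. supp_less (Point x) t}"
  by (cases t) (auto simp: initial_seg_def final_seg_def)

lemma initial_seg_points_weakly_below:
  "valid_support t \<Longrightarrow> initial_seg {x. supp_le (Point x) t}"
  by (cases t) (auto simp: supp_le_def initial_seg_def final_seg_def)

lemma supp_le_LeftCut_points_below_iff:
  assumes s: "valid_support s" and t: "valid_support t"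
  shows "supp_le s (LeftCut {x. supp_less (Point x) t}) \<longleftrightarrow>
           supp_less s t \<or> (\<exists>I. s = LeftCut I \<and> t = LeftCut I)"
proof (cases t)
  case (Point y)
  then show ?thesis
    using s by (cases s) (auto simp: initial_seg_subset_less_iff final_seg_meets_less_iff)
next
  case (LeftCut I)
  then show ?thesis
    by (cases s) auto
next
  case (RightCut J)
  then have "{x. supp_less (Point x) t} = - J"
    by auto
  then show ?thesis
    using s t RightCut by (cases s) (auto simp: final_seg_Compl_meets_iff)
qed

lemma supp_le_LeftCut_points_weakly_below_iff:
  assumes s: "valid_support s" and t: "valid_support t"
  shows "supp_le s (LeftCut {x. supp_le (Point x) t}) \<longleftrightarrow>
           supp_less s t \<or> (\<exists>I. s = LeftCut I \<and> t = LeftCut I) \<or> (\<exists>x. s = Point x \<and> t = Point x)"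
proof (cases t)
  case (Point y)
  then have below: "{x. supp_le (Point x) t} = {x. x \<le> y}"
    by simp
  show ?thesis
  proof (cases s)
    case (Point x)
    then show ?thesis
      using \<open>t = Point y\<close> by (auto simp: le_less)
  qed (use s \<open>t = Point y\<close> in \<open>auto simp: below initial_seg_subset_le_iff final_seg_meets_le_iff\<close>)
next
  case (LeftCut I)
  then show ?thesis
    by (cases s) auto
next
  case (RightCut J)
  then have "{x. supp_le (Point x) t} = - J"
    by auto
  then show ?thesis
    using s t RightCut by (cases s) (auto simp: final_seg_Compl_meets_iff)
qed

lemma initial_seg_mem_iff:
  assumes u: "is_ultrafilter u" and S: "initial_seg S"
  shows "S \<in> u \<longleftrightarrow> supp_le (supp u) (LeftCut S)"
proof (cases rule: supp_cases[OF u])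
  case (1 x)
  then show ?thesis
    by (simp add: supp_le_def principal_uf_def)
next
  case 2
  then show ?thesis
    using I_of_subset[OF _ S] ultrafilter_mono[OF u] by (auto simp: supp_le_def)
next
  case 3
  have "S \<in> u \<longleftrightarrow> S \<inter> J_of u \<noteq> {}"
  proof
    assume "S \<in> u"
    then show "S \<inter> J_of u \<noteq> {}"
      using ultrafilter_Int[OF u _ 3(2)] ultrafilter_nonempty[OF u] by blast
  next
    assume "S \<inter> J_of u \<noteq> {}"
    then obtain x where "x \<in> S" "x \<in> J_of u"
      by blast
    then have "{y. y \<le> x} \<in> u"
      using mem_J_of_iff[OF u] by simp
    moreover from \<open>x \<in> S\<close> have "{y. y \<le> x} \<subseteq> S"
      using S unfolding initial_seg_def by auto
    ultimately show "S \<in> u"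
      using ultrafilter_mono[OF u] by blast
  qed
  with 3 show ?thesis
    by (simp add: supp_le_def)
qed

lemma greaterThan_mem_iff:
  assumes v: "is_ultrafilter v"
  shows "{y. x < y} \<in> v \<longleftrightarrow> supp_less (Point x) (supp v)"
proof (cases rule: supp_cases[OF v])
  case (1 z)
  then show ?thesis
    by (simp add: principal_uf_def)
next
  case 2
  have "{y. x < y} \<in> v" if x: "x \<in> I_of v"
  proof -
    obtain z where "x < z" "{y. z \<le> y} \<in> v"
      using I_of_no_greatest[OF v 2(1,2) x] mem_I_of_iff[OF v] by blast
    moreover from \<open>x < z\<close> have "{y. z \<le> y} \<subseteq> {y. x < y}"
      by auto
    ultimately show ?thesis
      using ultrafilter_mono[OF v] by blast
  qed
  moreover have "x \<in> I_of v" if "{y. x < y} \<in> v"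
  proof -
    have "{y. x < y} \<subseteq> {y. x \<le> y}"
      by auto
    then show ?thesis
      using that mem_I_of_iff[OF v] ultrafilter_mono[OF v] by blast
  qed
  ultimately show ?thesis
    using 2 by auto
next
  case 3
  have "{y. x < y} = - {y. y \<le> x}"
    by auto
  then have "{y. x < y} \<in> v \<longleftrightarrow> x \<notin> J_of v"
    using ultrafilter_Compl_iff[OF v, of "{y. y \<le> x}"] mem_J_of_iff[OF v, of x] by simp
  with 3 show ?thesis
    by simp
qed

lemma atLeast_mem_iff:
  assumes v: "is_ultrafilter v"
  shows "{y. x \<le> y} \<in> v \<longleftrightarrow> supp_le (Point x) (supp v)"
proof (cases rule: supp_cases[OF v])
  case (1 z)
  then show ?thesis
    by (auto simp: supp_le_def principal_uf_def)
next
  case 2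
  then show ?thesis
    using mem_I_of_iff[OF v] by (simp add: supp_le_def)
next
  case 3
  have "{y. x \<le> y} \<in> v" if "x \<notin> J_of v"
  proof -
    have "- {y. y \<le> x} \<in> v"
      using that mem_J_of_iff[OF v] ultrafilter_Compl_iff[OF v] by blast
    moreover have "- {y. y \<le> x} \<subseteq> {y. x \<le> y}"
      by auto
    ultimately show ?thesis
      using ultrafilter_mono[OF v] by blast
  qed
  moreover have False if x: "x \<in> J_of v" and mem: "{y. x \<le> y} \<in> v"
  proof -
    obtain z where "z < x" "{y. y \<le> z} \<in> v"
      using J_of_no_least[OF v 3(1,2) x] mem_J_of_iff[OF v] by blast
    then show False
      using ultrafilter_Int[OF v mem] ultrafilter_nonempty[OF v] by fastforce
  qed
  ultimately show ?thesis
    using 3 by (auto simp: supp_le_def)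
qed

lemma uf_ext_less_iff:
  assumes u: "is_ultrafilter u" and v: "is_ultrafilter v"
  shows "uf_ext (<) u v \<longleftrightarrow>
           supp_less (supp u) (supp v) \<or> (\<exists>I. supp u = LeftCut I \<and> supp v = LeftCut I)"
proof -
  have "uf_ext (<) u v \<longleftrightarrow> {x. supp_less (Point x) (supp v)} \<in> u"
    unfolding uf_ext_def using greaterThan_mem_iff[OF v] by simp
  also have "\<dots> \<longleftrightarrow> supp_le (supp u) (LeftCut {x. supp_less (Point x) (supp v)})"
    using initial_seg_mem_iff[OF u] initial_seg_points_below valid_support_supp[OF v] by blast
  also have "\<dots> \<longleftrightarrow> supp_less (supp u) (supp v) \<or> (\<exists>I. supp u = LeftCut I \<and> supp v = LeftCut I)"
    using supp_le_LeftCut_points_below_iff valid_support_supp u v by blast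
  finally show ?thesis .
qed

lemma uf_ext_le_iff:
  assumes u: "is_ultrafilter u" and v: "is_ultrafilter v"
  shows "uf_ext (\<le>) u v \<longleftrightarrow>
           supp_less (supp u) (supp v) \<or> (\<exists>I. supp u = LeftCut I \<and> supp v = LeftCut I) \<or>
           (\<exists>x. supp u = Point x \<and> supp v = Point x)"
proof -
  have "uf_ext (\<le>) u v \<longleftrightarrow> {x. supp_le (Point x) (supp v)} \<in> u"
    unfolding uf_ext_def using atLeast_mem_iff[OF v] by simp
  also have "\<dots> \<longleftrightarrow> supp_le (supp u) (LeftCut {x. supp_le (Point x) (supp v)})"
    using initial_seg_mem_iff[OF u] initial_seg_points_weakly_below valid_support_supp[OF v] by blast
  also have "\<dots> \<longleftrightarrow> supp_less (supp u) (supp v) \<or> (\<exists>I. supp u = LeftCut I \<and> supp v = LeftCut I) \<or>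
           (\<exists>x. supp u = Point x \<and> supp v = Point x)"
    using supp_le_LeftCut_points_weakly_below_iff valid_support_supp u v by blast
  finally show ?thesis .
qed

lemma uf_ext_greater_iff:
  assumes u: "is_ultrafilter u" and v: "is_ultrafilter v"
  shows "uf_ext (>) u v \<longleftrightarrow>
           supp_less (supp v) (supp u) \<or> (\<exists>J. supp u = RightCut J \<and> supp v = RightCut J)"
proof -
  have gt: "uf_ext (>) u v \<longleftrightarrow> \<not> uf_ext (\<le>) u v"
    using ultrafilter_ext_not[OF u v, of "(\<le>)"] by (simp add: not_le)
  consider "supp u = supp v" | "supp_less (supp u) (supp v)" | "supp_less (supp v) (supp u)"
    using supp_less_linear valid_support_supp u v by blast
  then show ?thesis
  proof cases
    case 1
    then show ?thesis
      unfolding gt uf_ext_le_iff[OF u v] using supp_less_irrefl by (cases "supp v") auto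
  qed (auto simp: gt uf_ext_le_iff[OF u v] dest: supp_less_asym)
qed

lemma uf_ext_greater_eq_iff:
  assumes u: "is_ultrafilter u" and v: "is_ultrafilter v"
  shows "uf_ext (\<ge>) u v \<longleftrightarrow>
           supp_less (supp v) (supp u) \<or> (\<exists>J. supp u = RightCut J \<and> supp v = RightCut J) \<or>
           (\<exists>x. supp u = Point x \<and> supp v = Point x)"
proof -
  have ge: "uf_ext (\<ge>) u v \<longleftrightarrow> \<not> uf_ext (<) u v"
    using ultrafilter_ext_not[OF u v, of "(<)"] by (simp add: not_less)
  consider "supp u = supp v" | "supp_less (supp u) (supp v)" | "supp_less (supp v) (supp u)"
    using supp_less_linear valid_support_supp u v by blast
  then show ?thesis
  proof cases
    case 1
    then show ?thesis
      unfolding ge uf_ext_less_iff[OF u v] using supp_less_irrefl by (cases "supp v") auto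
  qed (auto simp: ge uf_ext_less_iff[OF u v] dest: supp_less_asym)
qed

theorem theorem1:
  fixes u v :: "'a::linorder set set"
  assumes "is_ultrafilter u" and "is_ultrafilter v"
  shows "(uf_ext (<) u v \<longleftrightarrow>
            supp_less (supp u) (supp v) \<or>
            (\<not> is_principal u \<and> \<not> is_principal v \<and> I_of u \<in> u \<and> I_of v \<in> v \<and> I_of u = I_of v))
       \<and> (uf_ext (\<le>) u v \<longleftrightarrow>
            supp_less (supp u) (supp v) \<or>
            (\<not> is_principal u \<and> \<not> is_principal v \<and> I_of u \<in> u \<and> I_of v \<in> v \<and> I_of u = I_of v) \<or>
            (\<exists>x. u = principal_uf x \<and> v = principal_uf x))
       \<and> (uf_ext (>) u v \<longleftrightarrow>
            supp_less (supp v) (supp u) \<or>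
            (\<not> is_principal u \<and> \<not> is_principal v \<and> J_of u \<in> u \<and> J_of v \<in> v \<and> J_of u = J_of v))
       \<and> (uf_ext (\<ge>) u v \<longleftrightarrow>
            supp_less (supp v) (supp u) \<or>
            (\<not> is_principal u \<and> \<not> is_principal v \<and> J_of u \<in> u \<and> J_of v \<in> v \<and> J_of u = J_of v) \<or>
            (\<exists>x. u = principal_uf x \<and> v = principal_uf x))
       \<and> (\<not> is_principal u \<and> \<not> is_principal v \<longrightarrow>
            (uf_ext (<) u v \<longleftrightarrow> uf_ext (\<le>) u v) \<and> (uf_ext (>) u v \<longleftrightarrow> uf_ext (\<ge>) u v))"
proof -
  have points: "(\<exists>x. supp u = Point x \<and> supp v = Point x) \<longleftrightarrow>
      (\<exists>x. u = principal_uf x \<and> v = principal_uf x)"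
    by (simp add: supp_eq_Point_iff)
  have left_cuts: "(\<exists>I. supp u = LeftCut I \<and> supp v = LeftCut I) \<longleftrightarrow>
      \<not> is_principal u \<and> \<not> is_principal v \<and> I_of u \<in> u \<and> I_of v \<in> v \<and> I_of u = I_of v"
    by (auto simp: supp_eq_LeftCut_iff)
  have right_cuts: "(\<exists>J. supp u = RightCut J \<and> supp v = RightCut J) \<longleftrightarrow>
      \<not> is_principal u \<and> \<not> is_principal v \<and> J_of u \<in> u \<and> J_of v \<in> v \<and> J_of u = J_of v"
    by (auto simp: supp_eq_RightCut_iff[OF assms(1)] supp_eq_RightCut_iff[OF assms(2)])
  show ?thesis
    unfolding uf_ext_less_iff[OF assms] uf_ext_le_iff[OF assms]
      uf_ext_greater_iff[OF assms] uf_ext_greater_eq_iff[OF assms] points left_cuts right_cuts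
    by (auto simp: is_principal_def)
qed

end
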